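(* Let $\mathcal{T}$ be a $\operatorname{Hom}$-finite Krull–Schmidt triangulated category over an algebraically closed field, $\mathcal{I}$ a functorially finite ideal, and $X\xrightarrow{f}Y\xrightarrow{g}Z\xrightarrow{h}X[1]$ a triangle. Then (1) $g$ is a right $\mathcal{I}$-approximation (resp. an $\mathcal{I}$-sink map) if and only if $h$ is a left $\mathrm{Gh}_{\mathcal{I}}$-approximation (resp. a $\mathrm{Gh}_{\mathcal{I}}$-source map); (2) $f$ is a left $\mathcal{I}$-approximation (resp. an $\mathcal{I}$-source map) if and only if $h$ is a right $\mathrm{CoGh}_{\mathcal{I}[1]}$-approximation (resp. a $\mathrm{CoGh}_{\mathcal{I}[1]}$-sink map).
   Context: Composition of $f:X\to Y$, $g:Y\to Z$ is $gf$. An ideal: subgroups $\mathcal{I}(X,Y)\subseteq\operatorname{Hom}(X,Y)$ closed under composition. $\mathcal{I}[1]=\{f[1]:f\in\mathcal{I}\}$. $\mathrm{Gh}_{\mathcal{I}}=\{f: fi=0\ \forall\text{ composable } i\in\mathcal{I}\}$, $\mathrm{CoGh}_{\mathcal{I}}=\{f: if=0\ \forall\text{ composable } i\in\mathcal{I}\}$. For an ideal $\mathcal{A}$, a left (resp. right) $\mathcal{A}$-approximation of $T$ is a morphism in $\mathcal{A}$ starting (resp. ending) at $T$ through which all morphisms of $\mathcal{A}$ starting (resp. ending) at $T$ factor; $\mathcal{A}$ is functorially finite if all objects have both. An $\mathcal{A}$-source (resp. $\mathcal{A}$-sink) map is a left minimal left (resp. right minimal right) $\mathcal{A}$-approximation;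 $f$ is left minimal if $gf=f$ forces $g$ invertible, right minimal if $fg=f$ forces $g$ invertible. *)

theory Defs
  imports Main "HOL-Computational_Algebra.Polynomial"
begin

text \<open>A k-linear category with a shift functor and a class of distinguished triangles,
  given by explicit data.  cmp g f is the composite gf (first f, then g).\<close>

record ('o, 'm, 'k) tcat =
  Ob   :: "'o set"
  Mor  :: "'m set"
  dom  :: "'m \<Rightarrow> 'o"
  cod  :: "'m \<Rightarrow> 'o"
  cmp  :: "'m \<Rightarrow> 'm \<Rightarrow> 'm"
  idm  :: "'o \<Rightarrow> 'm"
  add  :: "'m \<Rightarrow> 'm \<Rightarrow> 'm"
  neg  :: "'m \<Rightarrow> 'm"
  zer  :: "'o \<Rightarrow> 'o \<Rightarrow> 'm"
  smul :: "'k \<Rightarrow> 'm \<Rightarrow> 'm"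
  shO  :: "'o \<Rightarrow> 'o"
  shM  :: "'m \<Rightarrow> 'm"
  tri  :: "('o \<times> 'o \<times> 'o \<times> 'm \<times> 'm \<times> 'm) set"

definition hom :: "('o, 'm, 'k, 'z) tcat_scheme \<Rightarrow> 'o \<Rightarrow> 'o \<Rightarrow> 'm set" where
  "hom C X Y = {f \<in> Mor C. dom C f = X \<and> cod C f = Y}"

definition category :: "('o, 'm, 'k, 'z) tcat_scheme \<Rightarrow> bool" where
  "category C \<longleftrightarrow>
     (\<forall>f \<in> Mor C. dom C f \<in> Ob C \<and> cod C f \<in> Ob C) \<and>
     (\<forall>X \<in> Ob C. idm C X \<in> hom C X X) \<and>
     (\<forall>X \<in> Ob C. \<forall>Y \<in> Ob C. \<forall>Z \<in> Ob C. \<forall>f \<in> hom C X Y. \<forall>g \<in> hom C Y Z.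
        cmp C g f \<in> hom C X Z) \<and>
     (\<forall>W \<in> Ob C. \<forall>X \<in> Ob C. \<forall>Y \<in> Ob C. \<forall>Z \<in> Ob C.
        \<forall>f \<in> hom C W X. \<forall>g \<in> hom C X Y. \<forall>h \<in> hom C Y Z.
        cmp C h (cmp C g f) = cmp C (cmp C h g) f) \<and>
     (\<forall>f \<in> Mor C. cmp C f (idm C (dom C f)) = f \<and> cmp C (idm C (cod C f)) f = f)"

definition iso :: "('o, 'm, 'k, 'z) tcat_scheme \<Rightarrow> 'm \<Rightarrow> bool" where
  "iso C f \<longleftrightarrow> f \<in> Mor C \<and>
     (\<exists>g \<in> hom C (cod C f) (dom C f).
        cmp C g f = idm C (dom C f) \<and> cmp C f g = idm C (cod C f))"

definition k_linear :: "('o, 'm, 'k::field, 'z) tcat_scheme \<Rightarrow> bool" where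
  "k_linear C \<longleftrightarrow>
     (\<forall>X \<in> Ob C. \<forall>Y \<in> Ob C.
        zer C X Y \<in> hom C X Y \<and>
        (\<forall>f \<in> hom C X Y. \<forall>g \<in> hom C X Y. add C f g \<in> hom C X Y) \<and>
        (\<forall>f \<in> hom C X Y. neg C f \<in> hom C X Y) \<and>
        (\<forall>a. \<forall>f \<in> hom C X Y. smul C a f \<in> hom C X Y) \<and>
        (\<forall>f \<in> hom C X Y. \<forall>g \<in> hom C X Y. \<forall>h \<in> hom C X Y.
           add C (add C f g) h = add C f (add C g h)) \<and>
        (\<forall>f \<in> hom C X Y. \<forall>g \<in> hom C X Y. add C f g = add C g f) \<and>
        (\<forall>f \<in> hom C X Y. add C f (zer C X Y) = f) \<and>
        (\<forall>f \<in> hom C X Y. add C f (neg C f) = zer C X Y) \<and>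
        (\<forall>a b. \<forall>f \<in> hom C X Y. smul C a (smul C b f) = smul C (a * b) f) \<and>
        (\<forall>f \<in> hom C X Y. smul C 1 f = f) \<and>
        (\<forall>a b. \<forall>f \<in> hom C X Y. smul C (a + b) f = add C (smul C a f) (smul C b f)) \<and>
        (\<forall>a. \<forall>f \<in> hom C X Y. \<forall>g \<in> hom C X Y.
           smul C a (add C f g) = add C (smul C a f) (smul C a g))) \<and>
     (\<forall>X \<in> Ob C. \<forall>Y \<in> Ob C. \<forall>Z \<in> Ob C. \<forall>f \<in> hom C X Y. \<forall>g \<in> hom C Y Z.
        (\<forall>f' \<in> hom C X Y. cmp C g (add C f f') = add C (cmp C g f) (cmp C g f')) \<and>
        (\<forall>g' \<in> hom C Y Z. cmp C (add C g g') f = add C (cmp C g f) (cmp C g' f)) \<and>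
        (\<forall>a. cmp C g (smul C a f) = smul C a (cmp C g f)) \<and>
        (\<forall>a. cmp C (smul C a g) f = smul C a (cmp C g f)))"

definition zero_object :: "('o, 'm, 'k, 'z) tcat_scheme \<Rightarrow> 'o \<Rightarrow> bool" where
  "zero_object C Z0 \<longleftrightarrow> Z0 \<in> Ob C \<and> idm C Z0 = zer C Z0 Z0"

definition additive :: "('o, 'm, 'k::field, 'z) tcat_scheme \<Rightarrow> bool" where
  "additive C \<longleftrightarrow> category C \<and> k_linear C \<and>
     (\<exists>Z0. zero_object C Z0) \<and>
     (\<forall>X \<in> Ob C. \<forall>Y \<in> Ob C. \<exists>S \<in> Ob C.
        \<exists>i1 \<in> hom C X S. \<exists>i2 \<in> hom C Y S. \<exists>p1 \<in> hom C S X. \<exists>p2 \<in> hom C S Y.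
          cmp C p1 i1 = idm C X \<and> cmp C p2 i2 = idm C Y \<and>
          cmp C p2 i1 = zer C X Y \<and> cmp C p1 i2 = zer C Y X \<and>
          add C (cmp C i1 p1) (cmp C i2 p2) = idm C S)"

definition shift_equivalence :: "('o, 'm, 'k, 'z) tcat_scheme \<Rightarrow> bool" where
  "shift_equivalence C \<longleftrightarrow>
     (\<forall>X \<in> Ob C. shO C X \<in> Ob C \<and> shM C (idm C X) = idm C (shO C X)) \<and>
     (\<forall>X \<in> Ob C. \<forall>Y \<in> Ob C. bij_betw (shM C) (hom C X Y) (hom C (shO C X) (shO C Y))) \<and>
     (\<forall>X \<in> Ob C. \<forall>Y \<in> Ob C. \<forall>Z \<in> Ob C. \<forall>f \<in> hom C X Y. \<forall>g \<in> hom C Y Z.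
        shM C (cmp C g f) = cmp C (shM C g) (shM C f)) \<and>
     (\<forall>X \<in> Ob C. \<forall>Y \<in> Ob C. \<forall>f \<in> hom C X Y.
        (\<forall>g \<in> hom C X Y. shM C (add C f g) = add C (shM C f) (shM C g)) \<and>
        (\<forall>a. shM C (smul C a f) = smul C a (shM C f))) \<and>
     (\<forall>Y \<in> Ob C. \<exists>X \<in> Ob C. \<exists>u \<in> hom C (shO C X) Y. iso C u)"

definition candidate_triangle ::
  "('o, 'm, 'k, 'z) tcat_scheme \<Rightarrow> 'o \<Rightarrow> 'o \<Rightarrow> 'o \<Rightarrow> 'm \<Rightarrow> 'm \<Rightarrow> 'm \<Rightarrow> bool" where
  "candidate_triangle C X Y Z f g h \<longleftrightarrow> X \<in> Ob C \<and> Y \<in> Ob C \<and> Z \<in> Ob C \<and>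
     f \<in> hom C X Y \<and> g \<in> hom C Y Z \<and> h \<in> hom C Z (shO C X)"

definition triangulated :: "('o, 'm, 'k::field, 'z) tcat_scheme \<Rightarrow> bool" where
  "triangulated C \<longleftrightarrow> additive C \<and> shift_equivalence C \<and>
     (\<forall>(X, Y, Z, f, g, h) \<in> tri C. candidate_triangle C X Y Z f g h) \<and>
     \<comment> \<open>TR1: closure under isomorphisms of triangles\<close>
     (\<forall>(X, Y, Z, f, g, h) \<in> tri C. \<forall>X' Y' Z' f' g' h' a b c.
        candidate_triangle C X' Y' Z' f' g' h' \<and>
        a \<in> hom C X X' \<and> b \<in> hom C Y Y' \<and> c \<in> hom C Z Z' \<and>
        iso C a \<and> iso C b \<and> iso C c \<and>
        cmp C b f = cmp C f' a \<and> cmp C c g = cmp C g' b \<and>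
        cmp C (shM C a) h = cmp C h' c
        \<longrightarrow> (X', Y', Z', f', g', h') \<in> tri C) \<and>
     \<comment> \<open>TR1: X --id--> X --> 0 --> X[1]\<close>
     (\<forall>X \<in> Ob C. \<forall>Z0. zero_object C Z0 \<longrightarrow>
        (X, X, Z0, idm C X, zer C X Z0, zer C Z0 (shO C X)) \<in> tri C) \<and>
     \<comment> \<open>TR1: every morphism embeds in a triangle\<close>
     (\<forall>f \<in> Mor C. \<exists>Z g h. (dom C f, cod C f, Z, f, g, h) \<in> tri C) \<and>
     \<comment> \<open>TR2: rotation\<close>
     (\<forall>X Y Z f g h. candidate_triangle C X Y Z f g h \<longrightarrow>
        ((X, Y, Z, f, g, h) \<in> tri C \<longleftrightarrow>
         (Y, Z, shO C X, g, h, neg C (shM C f)) \<in> tri C)) \<and>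
     \<comment> \<open>TR3: completion of morphisms of triangles\<close>
     (\<forall>(X, Y, Z, f, g, h) \<in> tri C. \<forall>(X', Y', Z', f', g', h') \<in> tri C.
        \<forall>a \<in> hom C X X'. \<forall>b \<in> hom C Y Y'. cmp C b f = cmp C f' a \<longrightarrow>
        (\<exists>c \<in> hom C Z Z'. cmp C c g = cmp C g' b \<and> cmp C (shM C a) h = cmp C h' c)) \<and>
     \<comment> \<open>TR4: octahedral axiom\<close>
     (\<forall>X Y Z Z' X' Y' f g u1 d1 u2 d2 u3 d3.
        (X, Y, Z', f, u1, d1) \<in> tri C \<and> (Y, Z, X', g, u2, d2) \<in> tri C \<and>
        (X, Z, Y', cmp C g f, u3, d3) \<in> tri C \<longrightarrow>
        (\<exists>a \<in> hom C Z' Y'. \<exists>b \<in> hom C Y' X'.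
           (Z', Y', X', a, b, cmp C (shM C u1) d2) \<in> tri C \<and>
           cmp C a u1 = cmp C u3 g \<and> cmp C d3 a = d1 \<and>
           cmp C b u3 = u2 \<and> cmp C d2 b = cmp C (shM C f) d3))"

fun msum :: "('o, 'm, 'k, 'z) tcat_scheme \<Rightarrow> 'o \<Rightarrow> 'o \<Rightarrow> 'm list \<Rightarrow> 'm" where
  "msum C X Y [] = zer C X Y"
| "msum C X Y (f # fs) = add C f (msum C X Y fs)"

definition hom_finite :: "('o, 'm, 'k::field, 'z) tcat_scheme \<Rightarrow> bool" where
  "hom_finite C \<longleftrightarrow> (\<forall>X \<in> Ob C. \<forall>Y \<in> Ob C. \<exists>B. set B \<subseteq> hom C X Y \<and>
      (\<forall>f \<in> hom C X Y. \<exists>cs. length cs = length B \<and>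
          f = msum C X Y (map2 (smul C) cs B)))"

definition local_object :: "('o, 'm, 'k, 'z) tcat_scheme \<Rightarrow> 'o \<Rightarrow> bool" where
  "local_object C X \<longleftrightarrow> X \<in> Ob C \<and> idm C X \<noteq> zer C X X \<and>
     (\<forall>a \<in> hom C X X. \<forall>b \<in> hom C X X. \<not> iso C a \<and> \<not> iso C b \<longrightarrow> \<not> iso C (add C a b))"

definition krull_schmidt :: "('o, 'm, 'k, 'z) tcat_scheme \<Rightarrow> bool" where
  "krull_schmidt C \<longleftrightarrow> (\<forall>X \<in> Ob C. \<exists>Xs ins prs.
     length ins = length Xs \<and> length prs = length Xs \<and>
     (\<forall>i < length Xs. local_object C (Xs ! i) \<and>
        ins ! i \<in> hom C (Xs ! i) X \<and> prs ! i \<in> hom C X (Xs ! i)) \<and>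
     (\<forall>i < length Xs. \<forall>j < length Xs.
        cmp C (prs ! i) (ins ! j) = (if i = j then idm C (Xs ! i) else zer C (Xs ! j) (Xs ! i))) \<and>
     msum C X X (map2 (cmp C) ins prs) = idm C X)"

definition alg_closed_field :: "'k::field itself \<Rightarrow> bool" where
  "alg_closed_field _ \<longleftrightarrow> (\<forall>p :: 'k poly. degree p \<ge> 1 \<longrightarrow> (\<exists>x. poly p x = 0))"

definition ideal :: "('o, 'm, 'k, 'z) tcat_scheme \<Rightarrow> 'm set \<Rightarrow> bool" where
  "ideal C I \<longleftrightarrow> I \<subseteq> Mor C \<and>
     (\<forall>X \<in> Ob C. \<forall>Y \<in> Ob C. zer C X Y \<in> I \<and>
        (\<forall>f \<in> I \<inter> hom C X Y. \<forall>g \<in> I \<inter> hom C X Y. add C f g \<in> I) \<and>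
        (\<forall>f \<in> I \<inter> hom C X Y. neg C f \<in> I)) \<and>
     (\<forall>f \<in> I. \<forall>g \<in> Mor C. dom C g = cod C f \<longrightarrow> cmp C g f \<in> I) \<and>
     (\<forall>f \<in> I. \<forall>g \<in> Mor C. cod C g = dom C f \<longrightarrow> cmp C f g \<in> I)"

definition shift_ideal :: "('o, 'm, 'k, 'z) tcat_scheme \<Rightarrow> 'm set \<Rightarrow> 'm set" where
  "shift_ideal C I = shM C ` I"

definition Gh :: "('o, 'm, 'k, 'z) tcat_scheme \<Rightarrow> 'm set \<Rightarrow> 'm set" where
  "Gh C I = {f \<in> Mor C. \<forall>i \<in> I. cod C i = dom C f \<longrightarrow>
                cmp C f i = zer C (dom C i) (cod C f)}"

definition CoGh :: "('o, 'm, 'k, 'z) tcat_scheme \<Rightarrow> 'm set \<Rightarrow> 'm set" where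
  "CoGh C I = {f \<in> Mor C. \<forall>i \<in> I. dom C i = cod C f \<longrightarrow>
                cmp C i f = zer C (dom C f) (cod C i)}"

definition left_approx :: "('o, 'm, 'k, 'z) tcat_scheme \<Rightarrow> 'm set \<Rightarrow> 'o \<Rightarrow> 'm \<Rightarrow> bool" where
  "left_approx C A T a \<longleftrightarrow> a \<in> A \<and> dom C a = T \<and>
     (\<forall>b \<in> A. dom C b = T \<longrightarrow> (\<exists>c \<in> hom C (cod C a) (cod C b). cmp C c a = b))"

definition right_approx :: "('o, 'm, 'k, 'z) tcat_scheme \<Rightarrow> 'm set \<Rightarrow> 'o \<Rightarrow> 'm \<Rightarrow> bool" where
  "right_approx C A T a \<longleftrightarrow> a \<in> A \<and> cod C a = T \<and>
     (\<forall>b \<in> A. cod C b = T \<longrightarrow> (\<exists>c \<in> hom C (dom C b) (dom C a). cmp C a c = b))"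

definition functorially_finite :: "('o, 'm, 'k, 'z) tcat_scheme \<Rightarrow> 'm set \<Rightarrow> bool" where
  "functorially_finite C A \<longleftrightarrow>
     (\<forall>T \<in> Ob C. (\<exists>a. left_approx C A T a) \<and> (\<exists>a. right_approx C A T a))"

definition left_minimal :: "('o, 'm, 'k, 'z) tcat_scheme \<Rightarrow> 'm \<Rightarrow> bool" where
  "left_minimal C f \<longleftrightarrow> (\<forall>g \<in> hom C (cod C f) (cod C f). cmp C g f = f \<longrightarrow> iso C g)"

definition right_minimal :: "('o, 'm, 'k, 'z) tcat_scheme \<Rightarrow> 'm \<Rightarrow> bool" where
  "right_minimal C f \<longleftrightarrow> (\<forall>g \<in> hom C (dom C f) (dom C f). cmp C f g = f \<longrightarrow> iso C g)"

definition source_map :: "('o, 'm, 'k, 'z) tcat_scheme \<Rightarrow> 'm set \<Rightarrow> 'o \<Rightarrow> 'm \<Rightarrow> bool" where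
  "source_map C A T a \<longleftrightarrow> left_approx C A T a \<and> left_minimal C a"

definition sink_map :: "('o, 'm, 'k, 'z) tcat_scheme \<Rightarrow> 'm set \<Rightarrow> 'o \<Rightarrow> 'm \<Rightarrow> bool" where
  "sink_map C A T a \<longleftrightarrow> right_approx C A T a \<and> right_minimal C a"

end

(*
  A distinguished triangle X --f--> Y --g--> Z --h--> X[1] yields long exact Hom sequences:
  f, g, h are weak kernels of g, h, f[1], and g, h, f are weak cokernels of f, g, h[-1].

  (1) If g is a right I-approximation, then h is an I-ghost since hg = 0, and every I-ghost
  b out of Z kills g, hence factors through h. Conversely, let a : W -> Z be a right
  I-approximation with triangle W --a--> Z --p--> V. Then p is an I-ghost, so it factors
  through h; thus pg = 0, g factors through a and lies in I, and every i in I ending at Z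
  satisfies hi = 0, so it factors through g. Part (2) is the dual argument for I[1].

  Minimality is transported along endomorphisms of rotated triangles, using that an
  endomorphism (a, b, c) of a triangle with a and b invertible has c invertible. This is
  shown without the five lemma: an endomorphism e of Z with eg = g and he = h is invertible,
  because n = e - 1 factors as kh and as gm, so n^2 = khgm = 0 and e = 1 + n. The minimality
  half of (2) is the one of (1) for the rotated triangle Y --> Z --> X[1] --> Y[1].
*)

theory Submission
  imports Defs
begin

lemma ideal_Mor: "ideal C I \<Longrightarrow> i \<in> I \<Longrightarrow> i \<in> Mor C"
  and ideal_cmp_left: "ideal C I \<Longrightarrow> f \<in> I \<Longrightarrow> g \<in> Mor C \<Longrightarrow>
    dom C g = cod C f \<Longrightarrow> cmp C g f \<in> I"
  and ideal_cmp_right: "ideal C I \<Longrightarrow> f \<in> I \<Longrightarrow> g \<in> Mor C \<Longrightarrow>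
    cod C g = dom C f \<Longrightarrow> cmp C f g \<in> I"
  unfolding ideal_def by blast+

locale triangulated_category =
  fixes C :: "('o, 'm, 'k::field) tcat"
  assumes triangulated: "triangulated C"
begin

lemma additive: "additive C" and shift_equivalence: "shift_equivalence C"
  using triangulated unfolding triangulated_def by blast+

lemma category: "category C" and k_linear: "k_linear C"
  using additive unfolding additive_def by blast+

lemma hom_ob: "f \<in> hom C X Y \<Longrightarrow> X \<in> Ob C" "f \<in> hom C X Y \<Longrightarrow> Y \<in> Ob C"
  using category unfolding category_def hom_def by auto

lemma mor_hom: "f \<in> Mor C \<Longrightarrow> f \<in> hom C (dom C f) (cod C f)"
  by (simp add: hom_def)

lemma cmp_hom:
  assumes "f \<in> hom C X Y" "g \<in> hom C Y Z"
  shows "cmp C g f \<in> hom C X Z"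
  using category hom_ob[OF assms(1)] hom_ob(2)[OF assms(2)] assms unfolding category_def by blast

lemma cmp_assoc:
  assumes "f \<in> hom C W X" "g \<in> hom C X Y" "h \<in> hom C Y Z"
  shows "cmp C h (cmp C g f) = cmp C (cmp C h g) f"
  using category hom_ob[OF assms(1)] hom_ob[OF assms(3)] assms unfolding category_def by blast

lemma idm_hom: "X \<in> Ob C \<Longrightarrow> idm C X \<in> hom C X X"
  and cmp_idm_left: "f \<in> hom C X Y \<Longrightarrow> cmp C (idm C Y) f = f"
  and cmp_idm_right: "f \<in> hom C X Y \<Longrightarrow> cmp C f (idm C X) = f"
  using category unfolding category_def hom_def by auto

lemma isoI:
  "a \<in> hom C X Y \<Longrightarrow> b \<in> hom C Y X \<Longrightarrow>
    cmp C b a = idm C X \<Longrightarrow> cmp C a b = idm C Y \<Longrightarrow> iso C a"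
  unfolding iso_def hom_def by auto

lemma isoE:
  assumes "iso C a" "a \<in> hom C X Y"
  obtains b where "b \<in> hom C Y X" "cmp C b a = idm C X" "cmp C a b = idm C Y"
  using assms unfolding iso_def hom_def by auto

lemma iso_idm: assumes "X \<in> Ob C" shows "iso C (idm C X)"
  using isoI[OF idm_hom[OF assms] idm_hom[OF assms]] cmp_idm_left[OF idm_hom[OF assms]] by simp

lemma iso_if_iso_cmp_both:
  assumes c: "c \<in> hom C X Y" and c': "c' \<in> hom C Y X"
    and "iso C (cmp C c' c)" and "iso C (cmp C c c')"
  shows "iso C c"
proof -
  obtain u where u: "u \<in> hom C X X" "cmp C u (cmp C c' c) = idm C X"
    using isoE[OF \<open>iso C (cmp C c' c)\<close> cmp_hom[OF c c']] by blast
  obtain v where v: "v \<in> hom C Y Y" "cmp C (cmp C c c') v = idm C Y"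
    using isoE[OF \<open>iso C (cmp C c c')\<close> cmp_hom[OF c' c]] by blast
  define l where "l = cmp C u c'"
  define r where "r = cmp C c' v"
  have l: "l \<in> hom C Y X" and r: "r \<in> hom C Y X"
    unfolding l_def r_def using cmp_hom c c' u v by blast+
  have lc: "cmp C l c = idm C X" and cr: "cmp C c r = idm C Y"
    unfolding l_def r_def using cmp_assoc[OF c c' u(1)] cmp_assoc[OF v(1) c' c] u v by simp_all
  have "l = cmp C (cmp C l c) r"
    using cr cmp_assoc[OF r c l] cmp_idm_right[OF l] by simp
  then have "l = r"
    using lc cmp_idm_left[OF r] by simp
  then show ?thesis
    using isoI[OF c l lc] cr by simp
qed

lemma zer_hom: "X \<in> Ob C \<Longrightarrow> Y \<in> Ob C \<Longrightarrow> zer C X Y \<in> hom C X Y"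
  using k_linear unfolding k_linear_def by blast

lemma
  assumes "f \<in> hom C X Y"
  shows add_hom: "g \<in> hom C X Y \<Longrightarrow> add C f g \<in> hom C X Y"
    and neg_hom: "neg C f \<in> hom C X Y"
    and add_assoc: "g \<in> hom C X Y \<Longrightarrow> h \<in> hom C X Y \<Longrightarrow>
      add C (add C f g) h = add C f (add C g h)"
    and add_commute: "g \<in> hom C X Y \<Longrightarrow> add C f g = add C g f"
    and add_zer: "add C f (zer C X Y) = f"
    and add_neg: "add C f (neg C f) = zer C X Y"
  using k_linear[unfolded k_linear_def, THEN conjunct1, rule_format, OF hom_ob[OF assms]] assms
  by auto

lemma cmp_add_right:
  assumes "f \<in> hom C X Y" "f' \<in> hom C X Y" "g \<in> hom C Y Z"
  shows "cmp C g (add C f f') = add C (cmp C g f) (cmp C g f')"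
  using k_linear[unfolded k_linear_def, THEN conjunct2, rule_format,
      OF hom_ob[OF assms(1)] hom_ob(2)[OF assms(3)] assms(1,3)] assms(2)
  by blast

lemma cmp_add_left:
  assumes "f \<in> hom C X Y" "g \<in> hom C Y Z" "g' \<in> hom C Y Z"
  shows "cmp C (add C g g') f = add C (cmp C g f) (cmp C g' f)"
  using k_linear[unfolded k_linear_def, THEN conjunct2, rule_format,
      OF hom_ob[OF assms(1)] hom_ob(2)[OF assms(2)] assms(1,2)] assms(3)
  by blast

lemma zer_add: assumes "f \<in> hom C X Y" shows "add C (zer C X Y) f = f"
  using add_commute[OF assms zer_hom[OF hom_ob[OF assms]]] add_zer[OF assms] by simp

lemma neg_add: assumes "f \<in> hom C X Y" shows "add C (neg C f) f = zer C X Y"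
  using add_commute[OF assms neg_hom[OF assms]] add_neg[OF assms] by simp

lemma add_left_cancel:
  assumes a: "a \<in> hom C X Y" and b: "b \<in> hom C X Y" and c: "c \<in> hom C X Y"
    and eq: "add C a b = add C a c"
  shows "b = c"
proof -
  have "b = add C (add C (neg C a) a) b"
    using neg_add[OF a] zer_add[OF b] by simp
  also have "\<dots> = add C (add C (neg C a) a) c"
    using eq add_assoc[OF neg_hom[OF a] a] b c by simp
  also have "\<dots> = c"
    using neg_add[OF a] zer_add[OF c] by simp
  finally show ?thesis .
qed

lemma zer_unique:
  assumes a: "a \<in> hom C X Y" and "add C a a = a"
  shows "a = zer C X Y"
  using add_left_cancel[OF a a zer_hom[OF hom_ob[OF a]]] assms(2) add_zer[OF a] by simp

lemma neg_unique:
  assumes a: "a \<in> hom C X Y" and b: "b \<in> hom C X Y" and "add C a b = zer C X Y"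
  shows "b = neg C a"
  using add_left_cancel[OF a b neg_hom[OF a]] assms(3) add_neg[OF a] by simp

lemma neg_neg: assumes "a \<in> hom C X Y" shows "neg C (neg C a) = a"
  using neg_unique[OF neg_hom[OF assms] assms neg_add[OF assms]] by simp

lemma neg_eq_iff: "a \<in> hom C X Y \<Longrightarrow> b \<in> hom C X Y \<Longrightarrow> neg C a = neg C b \<longleftrightarrow> a = b"
  using neg_neg by metis

lemma neg_zer:
  assumes "X \<in> Ob C" "Y \<in> Ob C"
  shows "neg C (zer C X Y) = zer C X Y"
  using neg_unique[OF zer_hom[OF assms] zer_hom[OF assms] add_zer[OF zer_hom[OF assms]]] by simp

lemma cmp_zer_right:
  assumes g: "g \<in> hom C Y Z" and X: "X \<in> Ob C"
  shows "cmp C g (zer C X Y) = zer C X Z"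
proof -
  have z: "zer C X Y \<in> hom C X Y" using zer_hom[OF X hom_ob(1)[OF g]] .
  have "add C (cmp C g (zer C X Y)) (cmp C g (zer C X Y)) = cmp C g (zer C X Y)"
    using cmp_add_right[OF z z g] add_zer[OF z] by simp
  then show ?thesis using zer_unique[OF cmp_hom[OF z g]] by simp
qed

lemma cmp_zer_left:
  assumes f: "f \<in> hom C X Y" and Z: "Z \<in> Ob C"
  shows "cmp C (zer C Y Z) f = zer C X Z"
proof -
  have z: "zer C Y Z \<in> hom C Y Z" using zer_hom[OF hom_ob(2)[OF f] Z] .
  have "add C (cmp C (zer C Y Z) f) (cmp C (zer C Y Z) f) = cmp C (zer C Y Z) f"
    using cmp_add_left[OF f z z] add_zer[OF z] by simp
  then show ?thesis using zer_unique[OF cmp_hom[OF f z]] by simp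
qed

lemma cmp_neg_right:
  assumes f: "f \<in> hom C X Y" and g: "g \<in> hom C Y Z"
  shows "cmp C g (neg C f) = neg C (cmp C g f)"
proof (rule neg_unique[OF cmp_hom[OF f g] cmp_hom[OF neg_hom[OF f] g]])
  show "add C (cmp C g f) (cmp C g (neg C f)) = zer C X Z"
    using cmp_add_right[OF f neg_hom[OF f] g] add_neg[OF f] cmp_zer_right[OF g hom_ob(1)[OF f]]
    by simp
qed

lemma cmp_neg_left:
  assumes f: "f \<in> hom C X Y" and g: "g \<in> hom C Y Z"
  shows "cmp C (neg C g) f = neg C (cmp C g f)"
proof (rule neg_unique[OF cmp_hom[OF f g] cmp_hom[OF f neg_hom[OF g]]])
  show "add C (cmp C g f) (cmp C (neg C g) f) = zer C X Z"
    using cmp_add_left[OF f g neg_hom[OF g]] add_neg[OF g] cmp_zer_left[OF f hom_ob(2)[OF g]]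
    by simp
qed

lemma sq_zero_left_inverse:
  assumes n: "n \<in> hom C Z Z" and nn: "cmp C n n = zer C Z Z"
  shows "cmp C (add C (idm C Z) (neg C n)) (add C (idm C Z) n) = idm C Z"
proof -
  have Z: "Z \<in> Ob C" using hom_ob[OF n] by simp
  have i: "idm C Z \<in> hom C Z Z" and p: "add C (idm C Z) n \<in> hom C Z Z"
    using idm_hom[OF Z] add_hom[OF idm_hom[OF Z] n] by auto
  have "cmp C (neg C n) (add C (idm C Z) n) = add C (neg C n) (neg C (cmp C n n))"
    using cmp_add_right[OF i n neg_hom[OF n]] cmp_idm_right[OF neg_hom[OF n]] cmp_neg_left[OF n n]
    by simp
  also have "\<dots> = neg C n"
    using nn neg_zer[OF Z Z] add_zer[OF neg_hom[OF n]] by simp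
  finally have "cmp C (add C (idm C Z) (neg C n)) (add C (idm C Z) n)
      = add C (add C (idm C Z) n) (neg C n)"
    using cmp_add_left[OF p i neg_hom[OF n]] cmp_idm_left[OF p] by simp
  also have "\<dots> = idm C Z"
    using add_assoc[OF i n neg_hom[OF n]] add_neg[OF n] add_zer[OF i] by simp
  finally show ?thesis .
qed

lemma sq_zero_iso:
  assumes n: "n \<in> hom C Z Z" and nn: "cmp C n n = zer C Z Z"
  shows "iso C (add C (idm C Z) n)"
proof -
  have Z: "Z \<in> Ob C" using hom_ob[OF n] by simp
  have "cmp C (neg C n) (neg C n) = zer C Z Z"
    using cmp_neg_left[OF neg_hom[OF n] n] cmp_neg_right[OF n n] neg_neg nn cmp_hom[OF n n] by simp
  then have "cmp C (add C (idm C Z) n) (add C (idm C Z) (neg C n)) = idm C Z"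
    using sq_zero_left_inverse[OF neg_hom[OF n]] neg_neg[OF n] by simp
  then show ?thesis
    using isoI[OF add_hom[OF idm_hom[OF Z] n] add_hom[OF idm_hom[OF Z] neg_hom[OF n]]]
      sq_zero_left_inverse[OF n nn] by simp
qed

lemma shO_ob: "X \<in> Ob C \<Longrightarrow> shO C X \<in> Ob C"
  and shM_idm: "X \<in> Ob C \<Longrightarrow> shM C (idm C X) = idm C (shO C X)"
  and shM_bij: "X \<in> Ob C \<Longrightarrow> Y \<in> Ob C \<Longrightarrow>
    bij_betw (shM C) (hom C X Y) (hom C (shO C X) (shO C Y))"
  using shift_equivalence unfolding shift_equivalence_def by simp_all

lemma shM_cmp:
  assumes "f \<in> hom C X Y" "g \<in> hom C Y Z"
  shows "shM C (cmp C g f) = cmp C (shM C g) (shM C f)"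
  using shift_equivalence hom_ob[OF assms(1)] hom_ob(2)[OF assms(2)] assms
  unfolding shift_equivalence_def by metis

lemma shM_add:
  assumes "f \<in> hom C X Y" "g \<in> hom C X Y"
  shows "shM C (add C f g) = add C (shM C f) (shM C g)"
  using shift_equivalence hom_ob[OF assms(1)] assms unfolding shift_equivalence_def by metis

lemma shM_hom: assumes "f \<in> hom C X Y" shows "shM C f \<in> hom C (shO C X) (shO C Y)"
  using bij_betw_apply[OF shM_bij[OF hom_ob[OF assms]] assms] .

lemma shM_eq_iff:
  assumes "f \<in> hom C X Y" "g \<in> hom C X Y"
  shows "shM C f = shM C g \<longleftrightarrow> f = g"
  using inj_on_eq_iff[OF bij_betw_imp_inj_on[OF shM_bij[OF hom_ob[OF assms(1)]]] assms] .

lemma shM_surj: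
  assumes "X \<in> Ob C" "Y \<in> Ob C" "u \<in> hom C (shO C X) (shO C Y)"
  obtains f where "f \<in> hom C X Y" "shM C f = u"
proof -
  have "u \<in> shM C ` hom C X Y"
    using bij_betw_imp_surj_on[OF shM_bij[OF assms(1,2)]] assms(3) by simp
  then show ?thesis using that by (metis imageE)
qed

lemma shM_zer:
  assumes "X \<in> Ob C" "Y \<in> Ob C"
  shows "shM C (zer C X Y) = zer C (shO C X) (shO C Y)"
proof -
  have z: "zer C X Y \<in> hom C X Y" using zer_hom[OF assms] .
  have "add C (shM C (zer C X Y)) (shM C (zer C X Y)) = shM C (zer C X Y)"
    using shM_add[OF z z] add_zer[OF z] by simp
  then show ?thesis using zer_unique[OF shM_hom[OF z]] by simp
qed

lemma shM_neg:
  assumes f: "f \<in> hom C X Y"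
  shows "shM C (neg C f) = neg C (shM C f)"
proof (rule neg_unique[OF shM_hom[OF f] shM_hom[OF neg_hom[OF f]]])
  show "add C (shM C f) (shM C (neg C f)) = zer C (shO C X) (shO C Y)"
    using shM_add[OF f neg_hom[OF f]] add_neg[OF f] shM_zer[OF hom_ob[OF f]] by simp
qed

lemma shM_neg_cmp:
  assumes f: "f \<in> hom C X Y" and g: "g \<in> hom C Y Z"
  shows "cmp C (shM C g) (neg C (shM C f)) = shM C (neg C (cmp C g f))"
    and "cmp C (neg C (shM C g)) (shM C f) = shM C (neg C (cmp C g f))"
  using cmp_neg_right[OF shM_hom[OF f] shM_hom[OF g]] cmp_neg_left[OF shM_hom[OF f] shM_hom[OF g]]
    shM_cmp[OF f g] shM_neg[OF cmp_hom[OF f g]] by simp_all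

lemma iso_shM_iff:
  assumes a: "a \<in> hom C X Y"
  shows "iso C (shM C a) \<longleftrightarrow> iso C a"
proof
  have X: "X \<in> Ob C" and Y: "Y \<in> Ob C" using hom_ob[OF a] by auto
  assume "iso C (shM C a)"
  then obtain u where u: "u \<in> hom C (shO C Y) (shO C X)"
    "cmp C u (shM C a) = idm C (shO C X)" "cmp C (shM C a) u = idm C (shO C Y)"
    using isoE[OF _ shM_hom[OF a]] by blast
  obtain b where b: "b \<in> hom C Y X" "shM C b = u"
    using shM_surj[OF Y X u(1)] by blast
  have "shM C (cmp C b a) = shM C (idm C X)" and "shM C (cmp C a b) = shM C (idm C Y)"
    using u b shM_cmp[OF a b(1)] shM_cmp[OF b(1) a] shM_idm[OF X] shM_idm[OF Y] by simp_all
  then show "iso C a"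
    using isoI[OF a b(1)] shM_eq_iff[OF cmp_hom[OF a b(1)] idm_hom[OF X]]
      shM_eq_iff[OF cmp_hom[OF b(1) a] idm_hom[OF Y]] by simp
next
  have X: "X \<in> Ob C" and Y: "Y \<in> Ob C" using hom_ob[OF a] by auto
  assume "iso C a"
  then obtain b where b: "b \<in> hom C Y X" "cmp C b a = idm C X" "cmp C a b = idm C Y"
    using isoE[OF _ a] by blast
  then show "iso C (shM C a)"
    using isoI[OF shM_hom[OF a] shM_hom[OF b(1)]] shM_cmp[OF a b(1)] shM_cmp[OF b(1) a]
      shM_idm[OF X] shM_idm[OF Y] by simp
qed

subsection \<open>Distinguished triangles and exactness\<close>

lemma triangle_candidate:
    "(X, Y, Z, f, g, h) \<in> tri C \<Longrightarrow> candidate_triangle C X Y Z f g h"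
  using triangulated unfolding triangulated_def by fast

lemma triangle_morphism_exists:
  "(X, Y, Z, f, g, h) \<in> tri C \<Longrightarrow> (X', Y', Z', f', g', h') \<in> tri C \<Longrightarrow>
    a \<in> hom C X X' \<Longrightarrow> b \<in> hom C Y Y' \<Longrightarrow> cmp C b f = cmp C f' a \<Longrightarrow>
    \<exists>c \<in> hom C Z Z'. cmp C c g = cmp C g' b \<and> cmp C (shM C a) h = cmp C h' c"
  using triangulated unfolding triangulated_def by force

lemma triangle_zero_object: "X \<in> Ob C \<Longrightarrow> zero_object C Z0 \<Longrightarrow>
    (X, X, Z0, idm C X, zer C X Z0, zer C Z0 (shO C X)) \<in> tri C"
  and triangle_exists: "f \<in> Mor C \<Longrightarrow> \<exists>Z g h. (dom C f, cod C f, Z, f, g, h) \<in> tri C"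
  and triangle_rotate_iff: "candidate_triangle C X Y Z f g h \<Longrightarrow>
    (X, Y, Z, f, g, h) \<in> tri C \<longleftrightarrow> (Y, Z, shO C X, g, h, neg C (shM C f)) \<in> tri C"
  using triangulated by (simp_all add: triangulated_def)

lemma triangle_homs:
  assumes "(X, Y, Z, f, g, h) \<in> tri C"
  shows "X \<in> Ob C" "Y \<in> Ob C" "Z \<in> Ob C"
    and "f \<in> hom C X Y" "g \<in> hom C Y Z" "h \<in> hom C Z (shO C X)"
  using triangle_candidate[OF assms] unfolding candidate_triangle_def by auto

lemma triangle_rotate:
  "(X, Y, Z, f, g, h) \<in> tri C \<Longrightarrow> (Y, Z, shO C X, g, h, neg C (shM C f)) \<in> tri C"
  using triangle_candidate triangle_rotate_iff by blast

lemma zero_object_exists: "\<exists>Z0. zero_object C Z0"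
  using additive unfolding additive_def by blast

lemma zero_object_ob: "zero_object C Z0 \<Longrightarrow> Z0 \<in> Ob C"
  unfolding zero_object_def by simp

lemma zero_object_shO:
  assumes "zero_object C Z0"
  shows "zero_object C (shO C Z0)"
proof -
  have Z0: "Z0 \<in> Ob C" "idm C Z0 = zer C Z0 Z0" using assms unfolding zero_object_def by auto
  show ?thesis
    unfolding zero_object_def using shO_ob[OF Z0(1)] shM_idm[OF Z0(1)] shM_zer[OF Z0(1) Z0(1)] Z0(2)
    by simp
qed

lemma triangle_cmp_gf:
  assumes T: "(X, Y, Z, f, g, h) \<in> tri C"
  shows "cmp C g f = zer C X Z"
proof -
  note H = triangle_homs[OF T]
  obtain Z0 where "zero_object C Z0" using zero_object_exists by blast
  then obtain c where c: "c \<in> hom C Z0 Z" "cmp C c (zer C X Z0) = cmp C g f"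
    using triangle_morphism_exists[OF triangle_zero_object[OF H(1)] T idm_hom[OF H(1)] H(4)] by auto
  then show ?thesis using cmp_zer_right[OF c(1) H(1)] by simp
qed

lemma triangle_cmp_hg: "(X, Y, Z, f, g, h) \<in> tri C \<Longrightarrow> cmp C h g = zer C Y (shO C X)"
  using triangle_cmp_gf[OF triangle_rotate] .

lemma triangle_cmp_fh:
  assumes T: "(X, Y, Z, f, g, h) \<in> tri C"
  shows "cmp C (shM C f) h = zer C Z (shO C Y)"
proof -
  note H = triangle_homs[OF T]
  have "neg C (cmp C (shM C f) h) = neg C (zer C Z (shO C Y))"
    using triangle_cmp_gf[OF triangle_rotate[OF triangle_rotate[OF T]]]
      cmp_neg_left[OF H(6) shM_hom[OF H(4)]] neg_zer[OF H(3) shO_ob[OF H(2)]] by simp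
  then show ?thesis
    using neg_eq_iff[OF cmp_hom[OF H(6) shM_hom[OF H(4)]] zer_hom[OF H(3) shO_ob[OF H(2)]]] by simp
qed

lemma triangle_weak_cokernel_g:
  assumes T: "(X, Y, Z, f, g, h) \<in> tri C" and b: "b \<in> hom C Y V"
    and bf: "cmp C b f = zer C X V"
  obtains c where "c \<in> hom C Z V" "cmp C c g = b"
proof -
  note H = triangle_homs[OF T]
  obtain Z0 where z: "zero_object C Z0" using zero_object_exists by blast
  have V: "V \<in> Ob C" and Z0: "Z0 \<in> Ob C" using hom_ob(2)[OF b] zero_object_ob[OF z] .
  have "candidate_triangle C Z0 V V (zer C Z0 V) (idm C V) (zer C V (shO C Z0))"
    unfolding candidate_triangle_def using Z0 V shO_ob zer_hom idm_hom by blast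
  moreover have "neg C (shM C (zer C Z0 V)) = zer C (shO C Z0) (shO C V)"
    using shM_zer[OF Z0 V] neg_zer[OF shO_ob[OF Z0] shO_ob[OF V]] by simp
  ultimately have S: "(Z0, V, V, zer C Z0 V, idm C V, zer C V (shO C Z0)) \<in> tri C"
    using triangle_rotate_iff triangle_zero_object[OF V zero_object_shO[OF z]] by simp
  have "cmp C b f = cmp C (zer C Z0 V) (zer C X Z0)"
    using bf cmp_zer_left[OF zer_hom[OF H(1) Z0] V] by simp
  then obtain c where "c \<in> hom C Z V" "cmp C c g = cmp C (idm C V) b"
    using triangle_morphism_exists[OF T S zer_hom[OF H(1) Z0] b] by blast
  then show ?thesis using that cmp_idm_left[OF b] by simp
qed

lemma triangle_weak_kernel_g:
  assumes T: "(X, Y, Z, f, g, h) \<in> tri C" and i: "i \<in> hom C W Z"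
    and hi: "cmp C h i = zer C W (shO C X)"
  obtains c where "c \<in> hom C W Y" "cmp C g c = i"
proof -
  note H = triangle_homs[OF T]
  obtain Z0 where z: "zero_object C Z0" using zero_object_exists by blast
  have W: "W \<in> Ob C" and Z0: "Z0 \<in> Ob C" using hom_ob(1)[OF i] zero_object_ob[OF z] .
  have S: "(W, Z0, shO C W, zer C W Z0, zer C Z0 (shO C W), neg C (shM C (idm C W))) \<in> tri C"
    using triangle_rotate[OF triangle_zero_object[OF W z]] .
  have "cmp C (zer C Z0 (shO C X)) (zer C W Z0) = cmp C h i"
    using hi cmp_zer_left[OF zer_hom[OF W Z0] shO_ob[OF H(1)]] by simp
  then obtain c where c: "c \<in> hom C (shO C W) (shO C Y)"
    "cmp C (shM C i) (neg C (shM C (idm C W))) = cmp C (neg C (shM C g)) c"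
    using triangle_morphism_exists[OF S triangle_rotate[OF triangle_rotate[OF T]] i
        zer_hom[OF Z0 shO_ob[OF H(1)]]] by blast
  obtain c0 where c0: "c0 \<in> hom C W Y" "shM C c0 = c"
    using shM_surj[OF W H(2) c(1)] by blast
  have "shM C (neg C (cmp C i (idm C W))) = shM C (neg C (cmp C g c0))"
    using c(2) c0(2) shM_neg_cmp(1)[OF idm_hom[OF W] i] shM_neg_cmp(2)[OF c0(1) H(5)]
      shM_idm[OF W] by simp
  then have "i = cmp C g c0"
    using shM_eq_iff neg_eq_iff neg_hom cmp_hom[OF c0(1) H(5)] i cmp_idm_right[OF i] by metis
  then show ?thesis using that c0(1) by blast
qed

lemma triangle_weak_cokernel_h:
  assumes "(X, Y, Z, f, g, h) \<in> tri C" "b \<in> hom C Z V" "cmp C b g = zer C Y V"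
  obtains c where "c \<in> hom C (shO C X) V" "cmp C c h = b"
  using triangle_weak_cokernel_g[OF triangle_rotate[OF assms(1)] assms(2,3)] .

lemma triangle_weak_kernel_h:
  assumes T: "(X, Y, Z, f, g, h) \<in> tri C" and i: "i \<in> hom C W (shO C X)"
    and fi: "cmp C (shM C f) i = zer C W (shO C Y)"
  obtains c where "c \<in> hom C W Z" "cmp C h c = i"
proof -
  note H = triangle_homs[OF T]
  have "cmp C (neg C (shM C f)) i = zer C W (shO C Y)"
    using fi cmp_neg_left[OF i shM_hom[OF H(4)]] neg_zer[OF hom_ob(1)[OF i] shO_ob[OF H(2)]] by simp
  then show ?thesis using triangle_weak_kernel_g[OF triangle_rotate[OF T] i] that by blast
qed

lemma triangle_weak_kernel_f:
  assumes T: "(X, Y, Z, f, g, h) \<in> tri C" and i: "i \<in> hom C W Y"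
    and gi: "cmp C g i = zer C W Z"
  obtains c where "c \<in> hom C W X" "cmp C f c = i"
proof -
  note H = triangle_homs[OF T]
  have W: "W \<in> Ob C" using hom_ob(1)[OF i] .
  have "cmp C (shM C g) (shM C i) = zer C (shO C W) (shO C Z)"
    using shM_cmp[OF i H(5)] gi shM_zer[OF W H(3)] by simp
  then obtain c where c: "c \<in> hom C (shO C W) (shO C X)" "cmp C (neg C (shM C f)) c = shM C i"
    using triangle_weak_kernel_h[OF triangle_rotate[OF T] shM_hom[OF i]] by blast
  obtain c0 where c0: "c0 \<in> hom C W X" "shM C c0 = c"
    using shM_surj[OF W H(1) c(1)] by blast
  have "shM C i = shM C (neg C (cmp C f c0))"
    using c c0 shM_neg_cmp(2)[OF c0(1) H(4)] by simp
  then have "i = cmp C f (neg C c0)"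
    using shM_eq_iff[OF i neg_hom[OF cmp_hom[OF c0(1) H(4)]]] cmp_neg_right[OF c0(1) H(4)] by simp
  then show ?thesis using that neg_hom[OF c0(1)] by blast
qed

lemma triangle_weak_cokernel_f:
  assumes T: "(X, Y, Z, f, g, h) \<in> tri C" and b: "b \<in> hom C X V"
    and bh: "cmp C (shM C b) h = zer C Z (shO C V)"
  obtains c where "c \<in> hom C Y V" "cmp C c f = b"
proof -
  note H = triangle_homs[OF T]
  have V: "V \<in> Ob C" using hom_ob(2)[OF b] .
  obtain c where c: "c \<in> hom C (shO C Y) (shO C V)" "cmp C c (neg C (shM C f)) = shM C b"
    using triangle_weak_cokernel_h[OF triangle_rotate[OF T] shM_hom[OF b] bh] by blast
  obtain c0 where c0: "c0 \<in> hom C Y V" "shM C c0 = c"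
    using shM_surj[OF H(2) V c(1)] by blast
  have "shM C b = shM C (neg C (cmp C c0 f))"
    using c c0 shM_neg_cmp(1)[OF H(4) c0(1)] by simp
  then have "b = cmp C (neg C c0) f"
    using shM_eq_iff[OF b neg_hom[OF cmp_hom[OF H(4) c0(1)]]] cmp_neg_left[OF H(4) c0(1)] by simp
  then show ?thesis using that neg_hom[OF c0(1)] by blast
qed

subsection \<open>Endomorphisms of triangles and minimality\<close>

definition tri_endo ::
    "'o \<Rightarrow> 'o \<Rightarrow> 'o \<Rightarrow> 'm \<Rightarrow> 'm \<Rightarrow> 'm \<Rightarrow> 'm \<Rightarrow> 'm \<Rightarrow> 'm \<Rightarrow> bool" where
  "tri_endo X Y Z f g h a b c \<longleftrightarrow> a \<in> hom C X X \<and> b \<in> hom C Y Y \<and> c \<in> hom C Z Z \<and>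
     cmp C b f = cmp C f a \<and> cmp C c g = cmp C g b \<and> cmp C (shM C a) h = cmp C h c"

lemma comm_square_cmp:
  assumes x: "x \<in> hom C A B" and s: "s \<in> hom C A A" "s' \<in> hom C A A"
    and t: "t \<in> hom C B B" "t' \<in> hom C B B"
    and sq: "cmp C t x = cmp C x s" and sq': "cmp C t' x = cmp C x s'"
  shows "cmp C (cmp C t' t) x = cmp C x (cmp C s' s)"
proof -
  have "cmp C (cmp C t' t) x = cmp C t' (cmp C x s)"
    using cmp_assoc[OF x t] sq by simp
  also have "\<dots> = cmp C (cmp C x s') s"
    using cmp_assoc[OF s(1) x t(2)] sq' by simp
  also have "\<dots> = cmp C x (cmp C s' s)"
    using cmp_assoc[OF s x] by simp
  finally show ?thesis .
qed

lemma comm_square_inverse: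
  assumes x: "x \<in> hom C A B" and s: "s \<in> hom C A A" "s' \<in> hom C A A"
    and t: "t \<in> hom C B B" "t' \<in> hom C B B"
    and sq: "cmp C t x = cmp C x s"
    and ss': "cmp C s s' = idm C A" and t't: "cmp C t' t = idm C B"
  shows "cmp C t' x = cmp C x s'"
proof -
  have "cmp C t' x = cmp C t' (cmp C (cmp C x s) s')"
    using cmp_assoc[OF s(2,1) x] ss' cmp_idm_right[OF x] by simp
  also have "\<dots> = cmp C (cmp C t' t) (cmp C x s')"
    using sq cmp_assoc[OF s(2) x t(1)] cmp_assoc[OF cmp_hom[OF s(2) x] t] by simp
  also have "\<dots> = cmp C x s'"
    using t't cmp_idm_left[OF cmp_hom[OF s(2) x]] by simp
  finally show ?thesis .
qed

lemma tri_endo_exists: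
  assumes T: "(X, Y, Z, f, g, h) \<in> tri C" and a: "a \<in> hom C X X" and b: "b \<in> hom C Y Y"
    and "cmp C b f = cmp C f a"
  obtains c where "tri_endo X Y Z f g h a b c"
  using triangle_morphism_exists[OF T T a b assms(4)] a b assms(4) that
  unfolding tri_endo_def by blast

lemma tri_endo_cmp:
  assumes T: "(X, Y, Z, f, g, h) \<in> tri C"
    and "tri_endo X Y Z f g h a b c" and "tri_endo X Y Z f g h a' b' c'"
  shows "tri_endo X Y Z f g h (cmp C a' a) (cmp C b' b) (cmp C c' c)"
proof -
  note H = triangle_homs[OF T]
  have a: "a \<in> hom C X X" "a' \<in> hom C X X" and b: "b \<in> hom C Y Y" "b' \<in> hom C Y Y"
    and c: "c \<in> hom C Z Z" "c' \<in> hom C Z Z"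
    using assms(2,3) unfolding tri_endo_def by auto
  show ?thesis
    using assms(2,3) cmp_hom[OF a] cmp_hom[OF b] cmp_hom[OF c] shM_cmp[OF a]
      comm_square_cmp[OF H(4) a b] comm_square_cmp[OF H(5) b c]
      comm_square_cmp[OF H(6) c shM_hom[OF a(1)] shM_hom[OF a(2)]]
    unfolding tri_endo_def by simp
qed

lemma tri_endo_idm_iso:
  assumes T: "(X, Y, Z, f, g, h) \<in> tri C" and "tri_endo X Y Z f g h (idm C X) (idm C Y) e"
  shows "iso C e"
proof -
  note H = triangle_homs[OF T]
  have e: "e \<in> hom C Z Z" and eg: "cmp C e g = g" and he: "cmp C h e = h"
    using assms(2) shM_idm[OF H(1)] cmp_idm_right[OF H(5)] cmp_idm_left[OF H(6)]
    unfolding tri_endo_def by auto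
  have i: "idm C Z \<in> hom C Z Z" using idm_hom[OF H(3)] .
  define n where "n = add C (neg C (idm C Z)) e"
  have n: "n \<in> hom C Z Z" unfolding n_def using add_hom[OF neg_hom[OF i] e] .
  have "cmp C n g = zer C Y Z"
    unfolding n_def using cmp_add_left[OF H(5) neg_hom[OF i] e] cmp_neg_left[OF H(5) i]
      cmp_idm_left[OF H(5)] eg neg_add[OF H(5)] by simp
  then obtain k where k: "k \<in> hom C (shO C X) Z" "cmp C k h = n"
    using triangle_weak_cokernel_h[OF T n] by blast
  have "cmp C h n = zer C Z (shO C X)"
    unfolding n_def using cmp_add_right[OF neg_hom[OF i] e H(6)] cmp_neg_right[OF i H(6)]
      cmp_idm_right[OF H(6)] he neg_add[OF H(6)] by simp
  then obtain m where m: "m \<in> hom C Z Y" "cmp C g m = n"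
    using triangle_weak_kernel_g[OF T n] by blast
  have "cmp C n n = cmp C (cmp C k h) (cmp C g m)"
    using k m by simp
  also have "\<dots> = cmp C k (cmp C (cmp C h g) m)"
    using cmp_assoc[OF m(1) H(5) H(6)] cmp_assoc[OF cmp_hom[OF m(1) H(5)] H(6) k(1)] by simp
  also have "\<dots> = zer C Z Z"
    using triangle_cmp_hg[OF T] cmp_zer_left[OF m(1) shO_ob[OF H(1)]] cmp_zer_right[OF k(1) H(3)]
    by simp
  finally have "iso C (add C (idm C Z) n)"
    using sq_zero_iso[OF n] by simp
  moreover have "add C (idm C Z) n = e"
    unfolding n_def using add_assoc[OF i neg_hom[OF i] e] add_neg[OF i] zer_add[OF e] by simp
  ultimately show ?thesis by simp
qed

lemma tri_endo_iso:
  assumes T: "(X, Y, Z, f, g, h) \<in> tri C" and e: "tri_endo X Y Z f g h a b c"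
    and "iso C a" "iso C b"
  shows "iso C c"
proof -
  note H = triangle_homs[OF T]
  have a: "a \<in> hom C X X" and b: "b \<in> hom C Y Y" and c: "c \<in> hom C Z Z"
    and sq: "cmp C b f = cmp C f a"
    using e unfolding tri_endo_def by auto
  obtain a' where a': "a' \<in> hom C X X" "cmp C a' a = idm C X" "cmp C a a' = idm C X"
    using isoE[OF \<open>iso C a\<close> a] .
  obtain b' where b': "b' \<in> hom C Y Y" "cmp C b' b = idm C Y" "cmp C b b' = idm C Y"
    using isoE[OF \<open>iso C b\<close> b] .
  have "cmp C b' f = cmp C f a'"
    using comm_square_inverse[OF H(4) a a'(1) b b'(1) sq a'(3) b'(2)] .
  then obtain c' where e': "tri_endo X Y Z f g h a' b' c'"
    using tri_endo_exists[OF T a'(1) b'(1)] by blast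
  have c': "c' \<in> hom C Z Z" using e' unfolding tri_endo_def by simp
  have "iso C (cmp C c' c)"
    using tri_endo_idm_iso[OF T] tri_endo_cmp[OF T e e'] a'(2) b'(2) by simp
  moreover have "iso C (cmp C c c')"
    using tri_endo_idm_iso[OF T] tri_endo_cmp[OF T e' e] a'(3) b'(3) by simp
  ultimately show ?thesis using iso_if_iso_cmp_both[OF c c'] by blast
qed

lemma tri_endo_rotate_iff:
  assumes T: "(X, Y, Z, f, g, h) \<in> tri C" and a: "a \<in> hom C X X"
  shows "tri_endo Y Z (shO C X) g h (neg C (shM C f)) b c (shM C a)
    \<longleftrightarrow> tri_endo X Y Z f g h a b c"
proof -
  note H = triangle_homs[OF T]
  have "cmp C (shM C b) (neg C (shM C f)) = cmp C (neg C (shM C f)) (shM C a)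
      \<longleftrightarrow> cmp C b f = cmp C f a" if b: "b \<in> hom C Y Y"
    using shM_neg_cmp(1)[OF H(4) b] shM_neg_cmp(2)[OF a H(4)]
      shM_eq_iff[OF neg_hom[OF cmp_hom[OF H(4) b]] neg_hom[OF cmp_hom[OF a H(4)]]]
      neg_eq_iff[OF cmp_hom[OF H(4) b] cmp_hom[OF a H(4)]] by simp
  then show ?thesis using a shM_hom[OF a] unfolding tri_endo_def by auto
qed

lemma tri_endo_iso_first:
  assumes T: "(X, Y, Z, f, g, h) \<in> tri C" and e: "tri_endo X Y Z f g h a b c"
    and "iso C b" "iso C c"
  shows "iso C a"
proof -
  have a: "a \<in> hom C X X" using e unfolding tri_endo_def by simp
  have "iso C (shM C a)"
    using tri_endo_iso[OF triangle_rotate[OF T]] tri_endo_rotate_iff[OF T a] e assms(3,4) by blast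
  then show ?thesis using iso_shM_iff[OF a] by simp
qed

lemma left_minimal_if_right_minimal:
  assumes T: "(X, Y, Z, f, g, h) \<in> tri C" and min_g: "right_minimal C g"
  shows "left_minimal C h"
  unfolding left_minimal_def
proof (intro ballI impI)
  note H = triangle_homs[OF T]
  note RT = triangle_rotate[OF T]
  fix \<phi> assume \<phi>: "\<phi> \<in> hom C (cod C h) (cod C h)" "cmp C \<phi> h = h"
  then have \<phi>_hom: "\<phi> \<in> hom C (shO C X) (shO C X)" using H(6) unfolding hom_def by simp
  have "cmp C \<phi> h = cmp C h (idm C Z)" using \<phi>(2) cmp_idm_right[OF H(6)] by simp
  then obtain c where
    c: "tri_endo Z (shO C X) (shO C Y) h (neg C (shM C f)) (neg C (shM C g)) (idm C Z) \<phi> c"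
    using tri_endo_exists[OF triangle_rotate[OF RT] idm_hom[OF H(3)] \<phi>_hom] by blast
  then obtain \<psi> where \<psi>: "\<psi> \<in> hom C Y Y" "shM C \<psi> = c"
    using shM_surj[OF H(2) H(2)] unfolding tri_endo_def by blast
  then have e: "tri_endo Y Z (shO C X) g h (neg C (shM C f)) \<psi> (idm C Z) \<phi>"
    using c tri_endo_rotate_iff[OF RT \<psi>(1)] by simp
  then have "cmp C g \<psi> = g" using cmp_idm_left[OF H(5)] unfolding tri_endo_def by simp
  then have "iso C \<psi>" using min_g \<psi>(1) H(5) unfolding right_minimal_def hom_def by auto
  then show "iso C \<phi>" using tri_endo_iso[OF RT e] iso_idm[OF H(3)] by blast
qed

lemma right_minimal_if_left_minimal:
  assumes T: "(X, Y, Z, f, g, h) \<in> tri C" and min_h: "left_minimal C h"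
  shows "right_minimal C g"
  unfolding right_minimal_def
proof (intro ballI impI)
  note H = triangle_homs[OF T]
  note RT = triangle_rotate[OF T]
  fix \<psi> assume \<psi>: "\<psi> \<in> hom C (dom C g) (dom C g)" "cmp C g \<psi> = g"
  then have \<psi>_hom: "\<psi> \<in> hom C Y Y" using H(5) unfolding hom_def by simp
  have "cmp C (idm C Z) g = cmp C g \<psi>" using \<psi>(2) cmp_idm_left[OF H(5)] by simp
  then obtain \<phi> where e: "tri_endo Y Z (shO C X) g h (neg C (shM C f)) \<psi> (idm C Z) \<phi>"
    using tri_endo_exists[OF RT \<psi>_hom idm_hom[OF H(3)]] by blast
  then have "\<phi> \<in> hom C (shO C X) (shO C X)" "cmp C \<phi> h = h"
    using cmp_idm_right[OF H(6)] unfolding tri_endo_def by auto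
  then have "iso C \<phi>" using min_h H(6) unfolding left_minimal_def hom_def by auto
  then show "iso C \<psi>" using tri_endo_iso_first[OF RT e] iso_idm[OF H(3)] by blast
qed

lemma right_minimal_iff_left_minimal:
  "(X, Y, Z, f, g, h) \<in> tri C \<Longrightarrow> right_minimal C g \<longleftrightarrow> left_minimal C h"
  using left_minimal_if_right_minimal right_minimal_if_left_minimal by blast

lemma left_minimal_neg:
  assumes f: "f \<in> hom C X Y"
  shows "left_minimal C (neg C f) \<longleftrightarrow> left_minimal C f"
proof -
  have "cmp C u (neg C f) = neg C f \<longleftrightarrow> cmp C u f = f" if "u \<in> hom C Y Y" for u
    using cmp_neg_right[OF f that] neg_eq_iff[OF cmp_hom[OF f that] f] by simp
  then show ?thesis using f neg_hom[OF f] unfolding left_minimal_def hom_def by auto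
qed

lemma left_minimal_shM:
  assumes f: "f \<in> hom C X Y"
  shows "left_minimal C (shM C f) \<longleftrightarrow> left_minimal C f"
proof -
  have Y: "Y \<in> Ob C" using hom_ob(2)[OF f] .
  have cod: "cod C (shM C f) = shO C Y" "cod C f = Y"
    using f shM_hom[OF f] unfolding hom_def by auto
  have fixes_iff: "cmp C (shM C u) (shM C f) = shM C f \<longleftrightarrow> cmp C u f = f"
    if "u \<in> hom C Y Y" for u
    using shM_cmp[OF f that] shM_eq_iff[OF cmp_hom[OF f that] f] by simp
  show ?thesis
  proof
    assume "left_minimal C (shM C f)"
    then show "left_minimal C f"
      unfolding left_minimal_def cod using fixes_iff shM_hom iso_shM_iff by blast
  next
    assume min_f: "left_minimal C f"
    show "left_minimal C (shM C f)"
      unfolding left_minimal_def cod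
    proof (intro ballI impI)
      fix v assume v: "v \<in> hom C (shO C Y) (shO C Y)" "cmp C v (shM C f) = shM C f"
      obtain u where "u \<in> hom C Y Y" "shM C u = v" using shM_surj[OF Y Y v(1)] by blast
      then show "iso C v"
        using min_f v(2) fixes_iff iso_shM_iff cod unfolding left_minimal_def by blast
    qed
  qed
qed

lemma left_minimal_iff_right_minimal:
  assumes T: "(X, Y, Z, f, g, h) \<in> tri C"
  shows "left_minimal C f \<longleftrightarrow> right_minimal C h"
  using right_minimal_iff_left_minimal[OF triangle_rotate[OF T]]
    left_minimal_neg[OF shM_hom] left_minimal_shM triangle_homs(4)[OF T] by simp

subsection \<open>Ghosts and approximations\<close>

lemma Gh_if_right_approx:
  assumes T: "(X, Y, Z, f, g, h) \<in> tri C" and f: "right_approx C I Y f"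
  shows "g \<in> Gh C I"
  unfolding Gh_def
proof (intro CollectI conjI ballI impI)
  note H = triangle_homs[OF T]
  show "g \<in> Mor C" using H(5) unfolding hom_def by simp
  fix i assume "i \<in> I" "cod C i = dom C g"
  then obtain c where c: "c \<in> hom C (dom C i) X" "cmp C f c = i"
    using f H(4,5) unfolding right_approx_def hom_def by auto
  then have "cmp C g i = cmp C (cmp C g f) c" using cmp_assoc[OF c(1) H(4,5)] by simp
  then show "cmp C g i = zer C (dom C i) (cod C g)"
    using triangle_cmp_gf[OF T] cmp_zer_left[OF c(1) H(3)] H(5) unfolding hom_def by simp
qed

lemma shift_ideal_factors_through_shM:
  assumes I: "ideal C I" and f: "left_approx C I X f" "f \<in> hom C X Y"
    and i: "i \<in> shift_ideal C I" "dom C i = shO C X"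
  obtains B c where "c \<in> hom C Y B" "i = cmp C (shM C c) (shM C f)"
proof -
  have X: "X \<in> Ob C" using hom_ob(1)[OF f(2)] .
  obtain j where j: "j \<in> I" "i = shM C j" using i(1) unfolding shift_ideal_def by blast
  define A B where "A = dom C j" and "B = cod C j"
  have j_hom: "j \<in> hom C A B" using mor_hom[OF ideal_Mor[OF I j(1)]] unfolding A_def B_def .
  have A: "shO C A = shO C X" using shM_hom[OF j_hom] i(2) j(2) unfolding hom_def by simp
  \<comment> \<open>A need not be X, but the shift is full, so the identity of A[1] = X[1] lifts.\<close>
  then obtain u where u: "u \<in> hom C X A" "shM C u = idm C (shO C X)"
    using shM_surj[OF X hom_ob(1)[OF j_hom]] idm_hom[OF shO_ob[OF X]] by metis
  have "cmp C j u \<in> I" using ideal_cmp_right[OF I j(1)] u(1) j_hom unfolding hom_def by auto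
  then obtain c where c: "c \<in> hom C Y B" "cmp C c f = cmp C j u"
    using f cmp_hom[OF u(1) j_hom] unfolding left_approx_def hom_def by auto
  have "i = cmp C (shM C j) (shM C u)"
    using j(2) u(2) A cmp_idm_right[OF shM_hom[OF j_hom]] by simp
  also have "\<dots> = cmp C (shM C c) (shM C f)"
    using shM_cmp[OF u(1) j_hom] shM_cmp[OF f(2) c(1)] c(2) by simp
  finally show ?thesis using that c(1) by blast
qed

lemma CoGh_shift_if_left_approx:
  assumes T: "(X, Y, Z, f, g, h) \<in> tri C" and I: "ideal C I" and f: "left_approx C I X f"
  shows "h \<in> CoGh C (shift_ideal C I)"
  unfolding CoGh_def
proof (intro CollectI conjI ballI impI)
  note H = triangle_homs[OF T]
  show "h \<in> Mor C" using H(6) unfolding hom_def by simp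
  fix i assume i: "i \<in> shift_ideal C I" "dom C i = cod C h"
  then have "dom C i = shO C X" using H(6) unfolding hom_def by simp
  then obtain B c where c: "c \<in> hom C Y B" "i = cmp C (shM C c) (shM C f)"
    using shift_ideal_factors_through_shM[OF I f H(4) i(1)] by blast
  have "cmp C i h = cmp C (shM C c) (cmp C (shM C f) h)"
    using c(2) cmp_assoc[OF H(6) shM_hom[OF H(4)] shM_hom[OF c(1)]] by simp
  also have "\<dots> = zer C Z (shO C B)"
    using triangle_cmp_fh[OF T] cmp_zer_right[OF shM_hom[OF c(1)] H(3)] by simp
  finally show "cmp C i h = zer C (dom C h) (cod C i)"
    using c(2) cmp_hom[OF shM_hom[OF H(4)] shM_hom[OF c(1)]] H(6) unfolding hom_def by simp
qed

lemma left_approx_Gh_if_right_approx: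
  assumes T: "(X, Y, Z, f, g, h) \<in> tri C" and g: "right_approx C I Z g"
  shows "left_approx C (Gh C I) Z h"
  unfolding left_approx_def
proof (intro conjI ballI impI)
  note H = triangle_homs[OF T]
  show "h \<in> Gh C I" using Gh_if_right_approx[OF triangle_rotate[OF T] g] .
  show "dom C h = Z" using H(6) unfolding hom_def by simp
  fix b assume b: "b \<in> Gh C I" "dom C b = Z"
  then have b_hom: "b \<in> hom C Z (cod C b)" using mor_hom unfolding Gh_def by auto
  have "cmp C b g = zer C Y (cod C b)"
    using b g H(5) unfolding Gh_def right_approx_def hom_def by auto
  then show "\<exists>c \<in> hom C (cod C h) (cod C b). cmp C c h = b"
    using triangle_weak_cokernel_h[OF T b_hom] H(6) unfolding hom_def by auto
qed

lemma right_approx_if_left_approx_Gh: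
  assumes T: "(X, Y, Z, f, g, h) \<in> tri C" and I: "ideal C I"
    and a: "right_approx C I Z a" and h: "left_approx C (Gh C I) Z h"
  shows "right_approx C I Z g"
proof -
  note H = triangle_homs[OF T]
  have a_hom: "a \<in> hom C (dom C a) Z"
    using a mor_hom ideal_Mor[OF I] unfolding right_approx_def by fastforce
  obtain V p q where T2: "(dom C a, Z, V, a, p, q) \<in> tri C"
    using triangle_exists[OF ideal_Mor[OF I]] a unfolding right_approx_def by metis
  have "p \<in> Gh C I" using Gh_if_right_approx[OF T2 a] .
  then obtain c where c: "c \<in> hom C (shO C X) V" "cmp C c h = p"
    using h triangle_homs(5)[OF T2] H(6) unfolding left_approx_def hom_def by auto
  have "cmp C p g = cmp C c (cmp C h g)" using c cmp_assoc[OF H(5,6) c(1)] by simp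
  also have "\<dots> = zer C Y V" using triangle_cmp_hg[OF T] cmp_zer_right[OF c(1) H(2)] by simp
  finally obtain d where d: "d \<in> hom C Y (dom C a)" "cmp C a d = g"
    using triangle_weak_kernel_f[OF T2 H(5)] by blast
  show ?thesis
    unfolding right_approx_def
  proof (intro conjI ballI impI)
    show "g \<in> I" using ideal_cmp_right[OF I] a d unfolding right_approx_def hom_def by auto
    show "cod C g = Z" using H(5) unfolding hom_def by simp
    fix b assume b: "b \<in> I" "cod C b = Z"
    then have b_hom: "b \<in> hom C (dom C b) Z" using mor_hom ideal_Mor[OF I] by fastforce
    have "cmp C h b = zer C (dom C b) (shO C X)"
      using h b H(6) unfolding left_approx_def Gh_def hom_def by auto
    then show "\<exists>c \<in> hom C (dom C b) (dom C g). cmp C g c = b"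
      using triangle_weak_kernel_g[OF T b_hom] H(5) unfolding hom_def by auto
  qed
qed

lemma right_approx_CoGh_if_left_approx:
  assumes T: "(X, Y, Z, f, g, h) \<in> tri C" and I: "ideal C I" and f: "left_approx C I X f"
  shows "right_approx C (CoGh C (shift_ideal C I)) (shO C X) h"
  unfolding right_approx_def
proof (intro conjI ballI impI)
  note H = triangle_homs[OF T]
  show "h \<in> CoGh C (shift_ideal C I)" using CoGh_shift_if_left_approx[OF T I f] .
  show "cod C h = shO C X" using H(6) unfolding hom_def by simp
  fix b assume b: "b \<in> CoGh C (shift_ideal C I)" "cod C b = shO C X"
  then have b_hom: "b \<in> hom C (dom C b) (shO C X)" using mor_hom[of b] unfolding CoGh_def by simp
  have "shM C f \<in> shift_ideal C I" using f unfolding left_approx_def shift_ideal_def by blast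
  then have "cmp C (shM C f) b = zer C (dom C b) (shO C Y)"
    using b shM_hom[OF H(4)] unfolding CoGh_def hom_def by auto
  then show "\<exists>c \<in> hom C (dom C b) (dom C h). cmp C h c = b"
    using triangle_weak_kernel_h[OF T b_hom] H(6) unfolding hom_def by auto
qed

lemma left_approx_if_right_approx_CoGh:
  assumes T: "(X, Y, Z, f, g, h) \<in> tri C" and I: "ideal C I"
    and a: "left_approx C I X a" and h: "right_approx C (CoGh C (shift_ideal C I)) (shO C X) h"
  shows "left_approx C I X f"
proof -
  note H = triangle_homs[OF T]
  have a_hom: "a \<in> hom C X (cod C a)"
    using a mor_hom ideal_Mor[OF I] unfolding left_approx_def by fastforce
  obtain V p q where T2: "(X, cod C a, V, a, p, q) \<in> tri C"
    using triangle_exists[OF ideal_Mor[OF I]] a unfolding left_approx_def by metis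
  have "q \<in> CoGh C (shift_ideal C I)" using CoGh_shift_if_left_approx[OF T2 I a] .
  then obtain d where d: "d \<in> hom C V Z" "cmp C h d = q"
    using h triangle_homs(6)[OF T2] H(6) unfolding right_approx_def hom_def by auto
  have "cmp C (shM C f) q = cmp C (cmp C (shM C f) h) d"
    using d cmp_assoc[OF d(1) H(6) shM_hom[OF H(4)]] by simp
  also have "\<dots> = zer C V (shO C Y)"
    using triangle_cmp_fh[OF T] cmp_zer_left[OF d(1) shO_ob[OF H(2)]] by simp
  finally obtain c where c: "c \<in> hom C (cod C a) Y" "cmp C c a = f"
    using triangle_weak_cokernel_f[OF T2 H(4)] by blast
  show ?thesis
    unfolding left_approx_def
  proof (intro conjI ballI impI)
    show "f \<in> I" using ideal_cmp_left[OF I] a c unfolding left_approx_def hom_def by auto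
    show "dom C f = X" using H(4) unfolding hom_def by simp
    fix b assume b: "b \<in> I" "dom C b = X"
    then have b_hom: "b \<in> hom C X (cod C b)" using mor_hom ideal_Mor[OF I] by fastforce
    have "shM C b \<in> shift_ideal C I" using b unfolding shift_ideal_def by blast
    then have "cmp C (shM C b) h = zer C Z (shO C (cod C b))"
      using h shM_hom[OF b_hom] H(6) unfolding right_approx_def CoGh_def hom_def by auto
    then show "\<exists>c \<in> hom C (cod C f) (cod C b). cmp C c f = b"
      using triangle_weak_cokernel_f[OF T b_hom] H(4) unfolding hom_def by auto
  qed
qed

end

theorem lemma3p7:
  fixes C :: "('o, 'm, 'k::field) tcat"
    and I :: "'m set"
  assumes "alg_closed_field TYPE('k)"
    and "triangulated C" and "hom_finite C" and "krull_schmidt C"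
    and "ideal C I" and "functorially_finite C I"
    and "(X, Y, Z, f, g, h) \<in> tri C"
  shows "(right_approx C I Z g \<longleftrightarrow> left_approx C (Gh C I) Z h)
       \<and> (sink_map C I Z g \<longleftrightarrow> source_map C (Gh C I) Z h)
       \<and> (left_approx C I X f \<longleftrightarrow> right_approx C (CoGh C (shift_ideal C I)) (shO C X) h)
       \<and> (source_map C I X f \<longleftrightarrow> sink_map C (CoGh C (shift_ideal C I)) (shO C X) h)"
proof -
  interpret triangulated_category C by unfold_locales (rule assms(2))
  note T = assms(7) and I = assms(5)
  obtain a where a: "right_approx C I Z a"
    using assms(6) triangle_homs(3)[OF T] unfolding functorially_finite_def by blast
  obtain a' where a': "left_approx C I X a'"
    using assms(6) triangle_homs(1)[OF T] unfolding functorially_finite_def by blast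
  have part1: "right_approx C I Z g \<longleftrightarrow> left_approx C (Gh C I) Z h"
    using left_approx_Gh_if_right_approx[OF T] right_approx_if_left_approx_Gh[OF T I a] by blast
  have part2: "left_approx C I X f \<longleftrightarrow> right_approx C (CoGh C (shift_ideal C I)) (shO C X) h"
    using right_approx_CoGh_if_left_approx[OF T I] left_approx_if_right_approx_CoGh[OF T I a'] by blast
  show ?thesis
    unfolding sink_map_def source_map_def
    using part1 part2 right_minimal_iff_left_minimal[OF T] left_minimal_iff_right_minimal[OF T]
    by blast
qed

end
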